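(* Let $H$ be a Hermitian $n\times n$ matrix (e.g. the adjacency matrix of an undirected graph on $n$ vertices) and let $\omega\in(0,1]$. Consider the evolution $$\frac{d}{dt}\varrho=-\mathrm i(1-\omega)[H,\varrho]+\omega\Big(H\varrho H^\dagger-\tfrac12\{H^\dagger H,\varrho\}\Big),$$ i.e. the GKSL equation with the single Lindblad operator $H$. Then: (i) its stationary states are exactly the stationary states of the pure Hamiltonian evolution $\frac{d}{dt}\varrho=-\mathrm i[H,\varrho]$ (i.e. the density matrices commuting with $H$); (ii) the evolution is convergent, i.e. for every initial density matrix $\varrho_0$ the limit $\lim_{t\to\infty}\varrho_t$ exists; (iii) the evolution is not relaxing (has more than one stationary state) if and only if $n>1$.
   Context: A stationary state is a density matrix $\varrho$ for which the right-hand side vanishes. The evolution is relaxing if there is a unique stationary state. $\{A,B\}=AB+BA$. *)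

theory Defs
  imports "HOL-Analysis.Analysis"
begin

text \<open>Complex n x n matrices are modelled as complex^'n^'n, with n = CARD('n).\<close>

definition cadj :: "complex^'n^'n \<Rightarrow> complex^'n^'n" where
  "cadj A = (\<chi> i j. cnj (A $ j $ i))"

definition hermitian :: "complex^'n^'n \<Rightarrow> bool" where
  "hermitian A \<longleftrightarrow> cadj A = A"

definition cscale :: "complex \<Rightarrow> complex^'n^'n \<Rightarrow> complex^'n^'n" where
  "cscale c A = (\<chi> i j. c * A $ i $ j)"

definition mtrace :: "complex^'n^'n \<Rightarrow> complex" where
  "mtrace A = (\<Sum>i\<in>UNIV. A $ i $ i)"

definition psd :: "complex^'n^'n \<Rightarrow> bool" where
  "psd A \<longleftrightarrow> hermitian A \<and>
     (\<forall>x :: complex^'n. 0 \<le> Re (\<Sum>i\<in>UNIV. \<Sum>j\<in>UNIV. cnj (x $ i) * A $ i $ j * x $ j))"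

definition density_matrix :: "complex^'n^'n \<Rightarrow> bool" where
  "density_matrix \<rho> \<longleftrightarrow> psd \<rho> \<and> mtrace \<rho> = 1"

definition commutator :: "complex^'n^'n \<Rightarrow> complex^'n^'n \<Rightarrow> complex^'n^'n" where
  "commutator A B = A ** B - B ** A"

definition anticommutator :: "complex^'n^'n \<Rightarrow> complex^'n^'n \<Rightarrow> complex^'n^'n" where
  "anticommutator A B = A ** B + B ** A"

text \<open>Right-hand side of the GKSL equation with Hamiltonian (1-\<omega>)H and single
  Lindblad operator sqrt(\<omega>) H.\<close>
definition gksl :: "real \<Rightarrow> complex^'n^'n \<Rightarrow> complex^'n^'n \<Rightarrow> complex^'n^'n" where
  "gksl \<omega> H \<rho> =
     cscale (- \<i> * complex_of_real (1 - \<omega>)) (commutator H \<rho>)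
     + cscale (complex_of_real \<omega>)
         (H ** \<rho> ** cadj H - cscale (1/2) (anticommutator (cadj H ** H) \<rho>))"

definition hamiltonian_rhs :: "complex^'n^'n \<Rightarrow> complex^'n^'n \<Rightarrow> complex^'n^'n" where
  "hamiltonian_rhs H \<rho> = cscale (- \<i>) (commutator H \<rho>)"

definition stationary_state :: "(complex^'n^'n \<Rightarrow> complex^'n^'n) \<Rightarrow> complex^'n^'n \<Rightarrow> bool" where
  "stationary_state L \<rho> \<longleftrightarrow> density_matrix \<rho> \<and> L \<rho> = 0"

definition solution :: "(complex^'n^'n \<Rightarrow> complex^'n^'n) \<Rightarrow> complex^'n^'n
     \<Rightarrow> (real \<Rightarrow> complex^'n^'n) \<Rightarrow> bool" where
  "solution L \<rho>0 \<rho> \<longleftrightarrow> \<rho> 0 = \<rho>0 \<and>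
     (\<forall>t\<ge>0. (\<rho> has_vector_derivative L (\<rho> t)) (at t within {0..}))"

end

theory Submission
  imports Defs "HOL-Real_Asymp.Real_Asymp"
begin

text \<open>
  For Hermitian \<open>H\<close> the generator is \<open>L = -\<i>(1-\<omega>) D - (\<omega>/2) D\<^sup>2\<close> with \<open>D = [H, \<cdot>]\<close>,
  and \<open>D\<close> is self-adjoint for the Hilbert--Schmidt inner product. Hence \<open>\<langle>X, L X\<rangle> = -(\<omega>/2) \<parallel>D X\<parallel>\<^sup>2\<close>,
  so \<open>L X = 0\<close> exactly when \<open>X\<close> commutes with \<open>H\<close>. Along a trajectory, \<open>D \<rho>\<close> solves the same
  equation and stays in the range of \<open>D\<close>, on which \<open>\<parallel>D Y\<parallel> \<ge> c \<parallel>Y\<parallel>\<close>; so \<open>D \<rho>(t)\<close> decays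
  exponentially, and since \<open>\<rho>' = L \<rho>\<close> is a fixed linear image of \<open>D \<rho>\<close>, it is integrable on
  \<open>[0, \<infinity>)\<close> and \<open>\<rho>\<close> converges.

  A trace-one matrix is unique when \<open>n = 1\<close>. For \<open>n > 1\<close>, both \<open>I/n\<close> and \<open>M\<^sup>2/tr M\<^sup>2\<close> are density
  matrices commuting with \<open>H\<close>, and they differ as soon as \<open>M\<^sup>2\<close> is not scalar; a Hermitian \<open>M\<close>
  commuting with \<open>H\<close> with this property is \<open>H\<close> itself, \<open>H - I\<close>, or, if \<open>H\<close> is scalar, a
  rank-one diagonal projection.
\<close>

section \<open>Linear differential equations\<close>

text \<open>Bounded endomorphisms form a Banach algebra under composition; giving them a type of their
  own makes \<open>exp\<close> available, which solves linear differential equations.\<close>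

typedef (overloaded) ('a::"{banach,perfect_space}") endo = "UNIV :: ('a \<Rightarrow>\<^sub>L 'a) set"
  by simp

setup_lifting type_definition_endo

instantiation endo :: ("{banach,perfect_space}") real_normed_algebra_1
begin
lift_definition norm_endo :: "'a endo \<Rightarrow> real" is norm .
lift_definition plus_endo :: "'a endo \<Rightarrow> 'a endo \<Rightarrow> 'a endo" is "(+)" .
lift_definition minus_endo :: "'a endo \<Rightarrow> 'a endo \<Rightarrow> 'a endo" is "(-)" .
lift_definition uminus_endo :: "'a endo \<Rightarrow> 'a endo" is uminus .
lift_definition zero_endo :: "'a endo" is 0 .
lift_definition scaleR_endo :: "real \<Rightarrow> 'a endo \<Rightarrow> 'a endo" is scaleR .
lift_definition times_endo :: "'a endo \<Rightarrow> 'a endo \<Rightarrow> 'a endo" is "(o\<^sub>L)" .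
lift_definition one_endo :: "'a endo" is id_blinfun .
definition dist_endo :: "'a endo \<Rightarrow> 'a endo \<Rightarrow> real" where
  "dist_endo a b = norm (a - b)"
definition uniformity_endo :: "('a endo \<times> 'a endo) filter" where
  "uniformity_endo = (INF e\<in>{0 <..}. principal {(x, y). dist x y < e})"
definition open_endo :: "'a endo set \<Rightarrow> bool" where
  "open_endo S = (\<forall>x\<in>S. \<forall>\<^sub>F (x', y) in uniformity. x' = x \<longrightarrow> y \<in> S)"
definition sgn_endo :: "'a endo \<Rightarrow> 'a endo" where
  "sgn_endo x = scaleR (inverse (norm x)) x"

instance
  apply standard
  apply (simp_all only: dist_endo_def open_endo_def sgn_endo_def uniformity_endo_def)
  using norm_blinfun_id[where 'a='a]
  by (transfer, auto intro!: blinfun_eqI simp: algebra_simps blinfun.bilinear_simps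
      norm_triangle_ineq norm_blinfun_compose)+
end

lemma dist_endo_eq: "dist (a::'a::{banach,perfect_space} endo) b = dist (Rep_endo a) (Rep_endo b)"
  unfolding dist_endo_def dist_norm by transfer simp

instance endo :: ("{banach,perfect_space}") banach
proof
  fix X :: "nat \<Rightarrow> 'a endo"
  assume "Cauchy X"
  then have "Cauchy (\<lambda>n. Rep_endo (X n))"
    unfolding Cauchy_def dist_endo_eq by simp
  then obtain l where "(\<lambda>n. Rep_endo (X n)) \<longlonglongrightarrow> l"
    using Cauchy_convergent_iff convergent_def by blast
  then have "X \<longlonglongrightarrow> Abs_endo l"
    unfolding lim_sequentially dist_endo_eq by (simp add: Abs_endo_inverse)
  then show "convergent X"
    by (auto simp: convergent_def)
qed

lift_definition endo_apply :: "'a::{banach,perfect_space} endo \<Rightarrow> 'a \<Rightarrow> 'a" is blinfun_apply .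

lemma endo_apply_times: "endo_apply (A * B) x = endo_apply A (endo_apply B x)"
  by transfer simp

lemma endo_apply_one: "endo_apply 1 x = x"
  by transfer simp

lemma bounded_linear_endo_apply_left: "bounded_linear (\<lambda>A. endo_apply A x)"
  by (rule bounded_linear_intro[where K="norm x"])
    (transfer, auto simp: blinfun.bilinear_simps norm_blinfun mult.commute[of "norm x"])+

lemma linear_ode_solution_exists:
  fixes T :: "'a::{banach,perfect_space} \<Rightarrow> 'a"
  assumes "bounded_linear T"
  shows "\<exists>x. x 0 = x0 \<and> (\<forall>t. (x has_vector_derivative T (x t)) (at t within S))"
proof -
  define A where "A = Abs_endo (Blinfun T)"
  have apply_A: "endo_apply A y = T y" for y
    unfolding A_def endo_apply.rep_eq
    by (simp add: Abs_endo_inverse bounded_linear_Blinfun_apply[OF assms])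
  define x where "x t = endo_apply (exp (t *\<^sub>R A)) x0" for t
  have "(x has_vector_derivative T (x t)) (at t within S)" for t
  proof -
    have "(x has_vector_derivative endo_apply (exp (t *\<^sub>R A) * A) x0) (at t within S)"
      unfolding x_def
      by (rule bounded_linear.has_vector_derivative[OF bounded_linear_endo_apply_left
            exp_scaleR_has_vector_derivative_right])
    then show ?thesis
      unfolding exp_times_scaleR_commute endo_apply_times apply_A x_def .
  qed
  moreover have "x 0 = x0"
    unfolding x_def by (simp add: endo_apply_one)
  ultimately show ?thesis by blast
qed

section \<open>Exponential decay along dissipative flows\<close>

lemma exp_decay_if_deriv_le:
  fixes f f' :: "real \<Rightarrow> real"
  assumes deriv: "\<And>t. t \<ge> 0 \<Longrightarrow> (f has_real_derivative f' t) (at t within {0..})"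
    and le: "\<And>t. t \<ge> 0 \<Longrightarrow> f' t \<le> - k * f t" and "t \<ge> 0"
  shows "f t \<le> f 0 * exp (- k * t)"
proof -
  define h where "h s = exp (k * s) * f s" for s
  define h' where "h' s = exp (k * s) * (k * f s + f' s)" for s
  have "(h has_vector_derivative h' s) (at s within {0..t})" if "s \<in> {0..t}" for s
  proof -
    have "(f has_real_derivative f' s) (at s within {0..t})"
      using deriv[of s] that by (auto intro: DERIV_subset)
    then have "(h has_real_derivative exp (k * s) * k * f s + exp (k * s) * f' s) (at s within {0..t})"
      unfolding h_def by (auto intro!: derivative_eq_intros)
    then show ?thesis
      unfolding has_real_derivative_iff_has_vector_derivative h'_def by (simp add: algebra_simps)
  qed
  then have "(h' has_integral (h t - h 0)) {0..t}"
    using \<open>t \<ge> 0\<close> by (intro fundamental_theorem_of_calculus) auto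
  moreover have "h' s \<le> 0" if "s \<in> {0..t}" for s
    using le[of s] that unfolding h'_def by (auto intro!: mult_nonneg_nonpos)
  ultimately have "h t \<le> h 0"
    using has_integral_le[of h' "h t - h 0" "{0..t}" "\<lambda>_. 0" 0] by auto
  then show ?thesis
    unfolding h_def by (simp add: exp_minus field_simps)
qed

lemma norm_exp_decay_if_dissipative:
  fixes y :: "real \<Rightarrow> 'a::real_inner"
  assumes deriv: "\<And>t. t \<ge> 0 \<Longrightarrow> (y has_vector_derivative y' t) (at t within {0..})"
    and diss: "\<And>t. t \<ge> 0 \<Longrightarrow> y t \<bullet> y' t \<le> - k * (norm (y t))\<^sup>2" and "t \<ge> 0"
  shows "norm (y t) \<le> norm (y 0) * exp (- k * t)"
proof (rule power2_le_imp_le)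
  have "((\<lambda>s. y s \<bullet> y s) has_real_derivative 2 * (y s \<bullet> y' s)) (at s within {0..})"
    if "s \<ge> 0" for s
    using bounded_bilinear.has_vector_derivative[OF bounded_bilinear_inner deriv[OF that] deriv[OF that]]
    by (simp add: has_real_derivative_iff_has_vector_derivative inner_commute)
  moreover have "2 * (y s \<bullet> y' s) \<le> - (2 * k) * (y s \<bullet> y s)" if "s \<ge> 0" for s
    using diss[OF that] by (simp add: power2_norm_eq_inner)
  ultimately have "y t \<bullet> y t \<le> (y 0 \<bullet> y 0) * exp (- (2 * k) * t)"
    by (rule exp_decay_if_deriv_le) (use \<open>t \<ge> 0\<close> in auto)
  also have "exp (- (2 * k) * t) = (exp (- k * t))\<^sup>2"
    by (simp add: power2_eq_square exp_add[symmetric])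
  finally show "(norm (y t))\<^sup>2 \<le> (norm (y 0) * exp (- k * t))\<^sup>2"
    by (simp add: power2_norm_eq_inner power_mult_distrib)
qed simp

lemma tendsto_at_top_if_tail_bound:
  fixes x :: "real \<Rightarrow> 'a::complete_space"
  assumes tail: "\<And>s t. s0 \<le> s \<Longrightarrow> s \<le> t \<Longrightarrow> dist (x t) (x s) \<le> g s"
    and g: "(g \<longlongrightarrow> 0) at_top"
  shows "\<exists>l. (x \<longlongrightarrow> l) at_top"
proof -
  have "cauchy_filter (filtermap x at_top)"
    unfolding cauchy_filter_metric_filtermap
  proof (intro allI impI)
    fix e :: real
    assume "e > 0"
    then have "\<forall>\<^sub>F s in at_top. g s < e / 2 \<and> s0 \<le> s"
      using g by (intro eventually_conj order_tendstoD(2) eventually_ge_at_top) auto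
    then obtain s where s: "g s < e / 2" "s0 \<le> s"
      using eventually_happens by fastforce
    have "dist (x u) (x v) < e" if "s \<le> u" "s \<le> v" for u v
    proof -
      have "dist (x u) (x v) \<le> dist (x u) (x s) + dist (x v) (x s)"
        by (rule dist_triangle2)
      also have "\<dots> \<le> g s + g s"
        using s that by (intro add_mono tail) auto
      finally show ?thesis
        using s by simp
    qed
    then show "\<exists>P. eventually P at_top \<and> (\<forall>u v. P u \<and> P v \<longrightarrow> dist (x u) (x v) < e)"
      by (intro exI[of _ "\<lambda>u. s \<le> u"]) (auto intro: eventually_ge_at_top)
  qed
  then have "\<exists>l. filtermap x at_top \<le> nhds l"
    by (rule cauchy_filter_complete_converges[OF _ complete_UNIV]) (simp_all add: filtermap_bot_iff)
  then show ?thesis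
    unfolding filterlim_def .
qed

lemma convergent_if_norm_deriv_exp_decay:
  fixes x :: "real \<Rightarrow> 'a::banach"
  assumes deriv: "\<And>t. t \<ge> 0 \<Longrightarrow> (x has_vector_derivative x' t) (at t within {0..})"
    and bound: "\<And>t. t \<ge> 0 \<Longrightarrow> norm (x' t) \<le> M * exp (- k * t)" and "k > 0"
  shows "\<exists>l. (x \<longlongrightarrow> l) at_top"
proof (rule tendsto_at_top_if_tail_bound)
  fix s t :: real
  assume "0 \<le> s" "s \<le> t"
  define F where "F u = - (M / k) * exp (- k * u)" for u
  have "(x' has_integral (x t - x s)) {s..t}"
    using \<open>0 \<le> s\<close> \<open>s \<le> t\<close>
    by (intro fundamental_theorem_of_calculus) (auto intro: has_vector_derivative_within_subset[OF deriv])
  moreover have "((\<lambda>u. M * exp (- k * u)) has_integral (F t - F s)) {s..t}"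
  proof (rule fundamental_theorem_of_calculus[OF \<open>s \<le> t\<close>])
    fix u
    have "(F has_real_derivative - (M / k) * (exp (- k * u) * - k)) (at u within {s..t})"
      unfolding F_def by (auto intro!: derivative_eq_intros)
    then show "(F has_vector_derivative M * exp (- k * u)) (at u within {s..t})"
      unfolding has_real_derivative_iff_has_vector_derivative using \<open>k > 0\<close> by simp
  qed
  ultimately have "norm (x t - x s) \<le> F t - F s"
    using integral_norm_bound_integral[of x' "{s..t}" "\<lambda>u. M * exp (- k * u)"] bound \<open>0 \<le> s\<close>
    by (auto simp: has_integral_iff)
  also have "\<dots> \<le> M / k * exp (- k * s)"
    using order_trans[OF norm_ge_zero bound[of 0]] \<open>k > 0\<close> by (simp add: F_def)
  finally show "dist (x t) (x s) \<le> M / k * exp (- k * s)"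
    by (simp add: dist_norm)
next
  show "((\<lambda>s. M / k * exp (- k * s)) \<longlongrightarrow> 0) at_top"
    using \<open>k > 0\<close> by real_asymp
qed

lemma self_adjoint_bounded_below_on_range:
  fixes D :: "'a::euclidean_space \<Rightarrow> 'a"
  assumes "linear D" and self_adjoint: "\<And>x y. x \<bullet> D y = D x \<bullet> y"
  shows "\<exists>c>0. \<forall>x. c * norm (D x) \<le> norm (D (D x))"
proof -
  have "subspace (range D)"
    using linear_subspace_image[OF \<open>linear D\<close> subspace_UNIV] by simp
  moreover have "\<forall>y\<in>range D. D y = 0 \<longrightarrow> y = 0"
  proof clarify
    fix x
    assume "D (D x) = 0"
    then have "D x \<bullet> D x = 0"
      using self_adjoint[of "D x" x] by (simp add: inner_commute)
    then show "D x = 0" by simp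
  qed
  ultimately have "\<exists>c>0. \<forall>y\<in>range D. c * norm y \<le> norm (D y)"
    using \<open>linear D\<close> by (intro injective_imp_isometric closed_subspace) (auto simp: linear_conv_bounded_linear)
  then show ?thesis by auto
qed

lemma dissipative_linear_flow_convergent:
  fixes D G L :: "'a::euclidean_space \<Rightarrow> 'a" and x :: "real \<Rightarrow> 'a"
  assumes "linear D" "linear G"
    and L_eq: "\<And>y. L y = G (D y)" and D_L: "\<And>y. D (L y) = L (D y)"
    and self_adjoint: "\<And>y z. y \<bullet> D z = D y \<bullet> z"
    and diss: "\<And>y. y \<bullet> L y \<le> - w * (norm (D y))\<^sup>2" and "w > 0"
    and sol: "\<And>t. t \<ge> 0 \<Longrightarrow> (x has_vector_derivative L (x t)) (at t within {0..})"
  shows "\<exists>l. (x \<longlongrightarrow> l) at_top"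
proof -
  obtain c where "c > 0" and c: "\<And>y. c * norm (D y) \<le> norm (D (D y))"
    using self_adjoint_bounded_below_on_range[OF \<open>linear D\<close> self_adjoint] by blast
  obtain B where "B \<ge> 0" and B: "\<And>y. norm (G y) \<le> norm y * B"
    using bounded_linear.nonneg_bounded \<open>linear G\<close> linear_conv_bounded_linear by blast
  define k where "k = w * c\<^sup>2"
  define y where "y t = D (x t)" for t
  have y_sol: "(y has_vector_derivative L (y t)) (at t within {0..})" if "t \<ge> 0" for t
    unfolding y_def D_L[symmetric] using \<open>linear D\<close>
    by (auto simp: linear_conv_bounded_linear intro: bounded_linear.has_vector_derivative[OF _ sol[OF that]])
  have y_diss: "y t \<bullet> L (y t) \<le> - k * (norm (y t))\<^sup>2" for t
  proof -
    have "w * (c * norm (y t))\<^sup>2 \<le> w * (norm (D (y t)))\<^sup>2"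
      using c[of "x t"] \<open>c > 0\<close> \<open>w > 0\<close> unfolding y_def by (intro mult_left_mono power_mono) auto
    then show ?thesis
      using diss[of "y t"] by (simp add: k_def power_mult_distrib)
  qed
  have y_decay: "norm (y t) \<le> norm (y 0) * exp (- k * t)" if "t \<ge> 0" for t
    by (rule norm_exp_decay_if_dissipative[OF y_sol y_diss that])
  have L_decay: "norm (L (x t)) \<le> B * norm (y 0) * exp (- k * t)" if "t \<ge> 0" for t
  proof -
    have "norm (L (x t)) \<le> norm (y t) * B"
      unfolding L_eq y_def by (rule B)
    also have "\<dots> \<le> norm (y 0) * exp (- k * t) * B"
      by (intro mult_right_mono y_decay that \<open>B \<ge> 0\<close>)
    finally show ?thesis
      by (simp add: algebra_simps)
  qed
  have "k > 0"
    using \<open>c > 0\<close> \<open>w > 0\<close> by (simp add: k_def)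
  then show ?thesis
    using convergent_if_norm_deriv_exp_decay[of x "\<lambda>t. L (x t)"] sol L_decay by blast
qed

lemma matrix_eqI: "(\<And>i j. A $ i $ j = B $ i $ j) \<Longrightarrow> A = B"
  by (simp add: vec_eq_iff)

lemma matrix_matrix_mult_nth: "(A ** B) $ i $ j = (\<Sum>k\<in>UNIV. A $ i $ k * B $ k $ j)"
  by (simp add: matrix_matrix_mult_def)

lemma matrix_add_rdistrib: "((A::'a::semiring_1^'n^'m) + B) ** C = A ** C + B ** C"
  by (rule matrix_eqI) (simp add: matrix_matrix_mult_nth sum.distrib algebra_simps)

lemma matrix_diff_ldistrib: "(A::'a::ring_1^'n^'m) ** (B - C) = A ** B - A ** C"
  by (rule matrix_eqI) (simp add: matrix_matrix_mult_nth sum_subtractf algebra_simps)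

lemma matrix_diff_rdistrib: "((A::'a::ring_1^'n^'m) - B) ** C = A ** C - B ** C"
  by (rule matrix_eqI) (simp add: matrix_matrix_mult_nth sum_subtractf algebra_simps)

lemma mat_commute: "mat c ** A = A ** (mat c :: 'a::comm_semiring_1^'n^'n)"
  by (rule matrix_eqI)
    (simp add: matrix_matrix_mult_nth mat_def if_distrib if_distribR mult.commute cong: if_cong)

lemma cscale_nth [simp]: "cscale c A $ i $ j = c * A $ i $ j"
  by (simp add: cscale_def)

lemma cadj_nth [simp]: "cadj A $ i $ j = cnj (A $ j $ i)"
  by (simp add: cadj_def)

lemma cscale_0_right [simp]: "cscale c 0 = 0"
  by (rule matrix_eqI) simp

lemma cscale_1 [simp]: "cscale 1 A = A"
  by (rule matrix_eqI) simp

lemma cscale_add: "cscale c (A + B) = cscale c A + cscale c B"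
  by (rule matrix_eqI) (simp add: algebra_simps)

lemma cscale_diff: "cscale c (A - B) = cscale c A - cscale c B"
  by (rule matrix_eqI) (simp add: algebra_simps)

lemma cscale_cscale: "cscale c (cscale d A) = cscale (c * d) A"
  by (rule matrix_eqI) simp

lemma scaleR_eq_cscale: "r *\<^sub>R (A::complex^'n^'n) = cscale (of_real r) A"
  by (rule matrix_eqI) (simp only: vector_scaleR_component, simp add: scaleR_conv_of_real)

lemma cscale_mat: "cscale c (mat d) = mat (c * d)"
  by (rule matrix_eqI) (simp add: mat_def)

lemma cscale_in_range_mat_iff:
  assumes "c \<noteq> 0"
  shows "cscale c A \<in> range mat \<longleftrightarrow> A \<in> range mat"
proof
  assume "cscale c A \<in> range mat"
  then obtain d where "cscale c A = mat d"
    by blast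
  then have "cscale (inverse c) (cscale c A) = mat (inverse c * d)"
    by (simp add: cscale_mat)
  then show "A \<in> range mat"
    using assms by (simp add: cscale_cscale)
qed (auto simp: cscale_mat)

lemma matrix_mult_cscale_left: "cscale c A ** B = cscale c (A ** B)"
  by (rule matrix_eqI) (simp add: matrix_matrix_mult_nth sum_distrib_left algebra_simps)

lemma matrix_mult_cscale_right: "A ** cscale c B = cscale c (A ** B)"
  by (rule matrix_eqI) (simp add: matrix_matrix_mult_nth sum_distrib_left algebra_simps)

lemma cadj_matrix_mult: "cadj (A ** B) = cadj B ** cadj A"
  by (rule matrix_eqI) (simp add: matrix_matrix_mult_nth cnj_sum mult.commute)

lemma cadj_cadj [simp]: "cadj (cadj A) = A"
  by (rule matrix_eqI) simp

lemma cadj_cscale: "cadj (cscale c A) = cscale (cnj c) (cadj A)"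
  by (rule matrix_eqI) simp

lemma cadj_mat: "cadj (mat c) = mat (cnj c)"
  by (rule matrix_eqI) (simp add: mat_def)

lemma linear_cscale: "linear (cscale c :: complex^'n^'n \<Rightarrow> _)"
  by (rule linearI) (simp_all add: cscale_add scaleR_eq_cscale cscale_cscale mult.commute)

lemma commutator_0_right [simp]: "commutator H 0 = 0"
  by (simp add: commutator_def)

lemma commutator_eq_0_iff: "commutator A B = 0 \<longleftrightarrow> A ** B = B ** A"
  unfolding commutator_def by simp

lemma commutator_add: "commutator H (A + B) = commutator H A + commutator H B"
  unfolding commutator_def by (simp add: matrix_add_ldistrib matrix_add_rdistrib)

lemma commutator_cscale: "commutator H (cscale c A) = cscale c (commutator H A)"
  unfolding commutator_def by (simp add: matrix_mult_cscale_left matrix_mult_cscale_right cscale_diff)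

lemma linear_commutator: "linear (commutator H)"
  by (rule linearI) (simp_all add: commutator_add scaleR_eq_cscale commutator_cscale)

lemma mtrace_cscale: "mtrace (cscale c A) = c * mtrace A"
  by (simp add: mtrace_def sum_distrib_left)

lemma matrix_eq_if_mtrace_eq:
  assumes "CARD('n) = 1" and "mtrace (A::complex^'n^'n) = mtrace B"
  shows "A = B"
proof -
  obtain a :: 'n where a: "UNIV = {a}"
    using assms(1) card_1_singletonE by blast
  then have "i = a" for i :: 'n
    by blast
  moreover have "A $ a $ a = B $ a $ a"
    using assms(2) unfolding mtrace_def a by simp
  ultimately show ?thesis
    by (metis matrix_eqI)
qed

section \<open>The Hilbert--Schmidt inner product\<close>

definition hs_inner :: "complex^'n^'m \<Rightarrow> complex^'n^'m \<Rightarrow> complex" where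
  "hs_inner X Y = (\<Sum>i\<in>UNIV. \<Sum>j\<in>UNIV. cnj (X $ i $ j) * Y $ i $ j)"

lemma inner_eq_Re_hs_inner: "X \<bullet> Y = Re (hs_inner X Y)"
  by (simp add: hs_inner_def inner_vec_def inner_complex_def Re_sum)

lemma hs_inner_commute: "hs_inner Y X = cnj (hs_inner X Y)"
  by (simp add: hs_inner_def cnj_sum mult.commute)

lemma hs_inner_self: "hs_inner X X = of_real ((norm X)\<^sup>2)"
proof (rule complex_eqI)
  show "Re (hs_inner X X) = Re (of_real ((norm X)\<^sup>2))"
    using inner_eq_Re_hs_inner[of X X] by (simp add: power2_norm_eq_inner)
qed (simp add: hs_inner_def Im_sum)

lemma hs_inner_add_right: "hs_inner X (Y + Z) = hs_inner X Y + hs_inner X Z"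
  by (simp add: hs_inner_def sum.distrib algebra_simps)

lemma hs_inner_diff_right: "hs_inner X (Y - Z) = hs_inner X Y - hs_inner X Z"
  by (simp add: hs_inner_def sum_subtractf algebra_simps)

lemma hs_inner_diff_left: "hs_inner (X - Y) Z = hs_inner X Z - hs_inner Y Z"
  by (simp add: hs_inner_def sum_subtractf algebra_simps)

lemma hs_inner_cscale_right: "hs_inner X (cscale c Y) = c * hs_inner X Y"
  by (simp add: hs_inner_def sum_distrib_left algebra_simps)

lemma hs_inner_mult_left: "hs_inner X (A ** Y) = hs_inner (cadj A ** X) Y"
proof -
  have "hs_inner X (A ** Y) = (\<Sum>i\<in>UNIV. \<Sum>j\<in>UNIV. \<Sum>k\<in>UNIV. cnj (X $ i $ j) * A $ i $ k * Y $ k $ j)"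
    by (simp add: hs_inner_def matrix_matrix_mult_nth sum_distrib_left mult.assoc)
  also have "\<dots> = (\<Sum>i\<in>UNIV. \<Sum>k\<in>UNIV. \<Sum>j\<in>UNIV. cnj (X $ i $ j) * A $ i $ k * Y $ k $ j)"
    by (rule sum.cong[OF refl], rule sum.swap)
  also have "\<dots> = (\<Sum>k\<in>UNIV. \<Sum>i\<in>UNIV. \<Sum>j\<in>UNIV. cnj (X $ i $ j) * A $ i $ k * Y $ k $ j)"
    by (rule sum.swap)
  also have "\<dots> = (\<Sum>k\<in>UNIV. \<Sum>j\<in>UNIV. \<Sum>i\<in>UNIV. cnj (X $ i $ j) * A $ i $ k * Y $ k $ j)"
    by (rule sum.cong[OF refl], rule sum.swap)
  also have "\<dots> = hs_inner (cadj A ** X) Y"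
    by (simp add: hs_inner_def matrix_matrix_mult_nth sum_distrib_left sum_distrib_right cnj_sum mult_ac)
  finally show ?thesis .
qed

lemma hs_inner_mult_right: "hs_inner X (Y ** A) = hs_inner (X ** cadj A) Y"
proof -
  have "hs_inner X (Y ** A) = (\<Sum>i\<in>UNIV. \<Sum>j\<in>UNIV. \<Sum>k\<in>UNIV. cnj (X $ i $ j) * Y $ i $ k * A $ k $ j)"
    by (simp add: hs_inner_def matrix_matrix_mult_nth sum_distrib_left mult.assoc)
  also have "\<dots> = (\<Sum>i\<in>UNIV. \<Sum>k\<in>UNIV. \<Sum>j\<in>UNIV. cnj (X $ i $ j) * Y $ i $ k * A $ k $ j)"
    by (rule sum.cong[OF refl], rule sum.swap)
  also have "\<dots> = hs_inner (X ** cadj A) Y"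
    by (simp add: hs_inner_def matrix_matrix_mult_nth sum_distrib_left sum_distrib_right cnj_sum mult_ac)
  finally show ?thesis .
qed

lemma hs_inner_commutator:
  assumes "hermitian H"
  shows "hs_inner X (commutator H Y) = hs_inner (commutator H X) Y"
  using assms unfolding hermitian_def commutator_def
  by (simp add: hs_inner_diff_right hs_inner_diff_left hs_inner_mult_left[of X H]
      hs_inner_mult_right[of X Y H])

lemma inner_commutator:
  assumes "hermitian H"
  shows "X \<bullet> commutator H Y = commutator H X \<bullet> Y"
  by (simp add: inner_eq_Re_hs_inner hs_inner_commutator[OF assms])

section \<open>The GKSL generator\<close>

lemma linear_gksl: "linear (gksl \<omega> H)"
  by (rule linearI)
    (simp_all add: gksl_def commutator_add commutator_cscale anticommutator_def scaleR_eq_cscale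
      matrix_add_ldistrib matrix_add_rdistrib matrix_mult_cscale_left matrix_mult_cscale_right
      cscale_add cscale_diff cscale_cscale mult.commute add_ac diff_add_eq)

lemma gksl_hermitian:
  assumes "hermitian H"
  shows "gksl \<omega> H X = cscale (- \<i> * of_real (1 - \<omega>)) (commutator H X)
    + cscale (- of_real \<omega> / 2) (commutator H (commutator H X))"
proof -
  have double: "commutator H (commutator H X) = H ** H ** X - cscale 2 (H ** X ** H) + X ** (H ** H)"
    unfolding commutator_def
    by (rule matrix_eqI) (simp add: matrix_diff_ldistrib matrix_diff_rdistrib matrix_mul_assoc)
  from assms have "cadj H = H"
    unfolding hermitian_def .
  then show ?thesis
    unfolding gksl_def anticommutator_def double by (intro matrix_eqI) (simp add: algebra_simps)
qed

text \<open>The Hamiltonian part drops out because \<open>hs_inner X (commutator H X)\<close> is real.\<close>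

lemma inner_gksl_self:
  assumes "hermitian H"
  shows "X \<bullet> gksl \<omega> H X = - (\<omega> / 2) * (norm (commutator H X))\<^sup>2"
proof -
  have "cnj (hs_inner X (commutator H X)) = hs_inner X (commutator H X)"
    by (metis hs_inner_commute hs_inner_commutator[OF assms])
  then have real: "Im (hs_inner X (commutator H X)) = 0"
    by (metis Reals_cnj_iff complex_is_Real_iff)
  show ?thesis
    using real
    unfolding inner_eq_Re_hs_inner gksl_hermitian[OF assms] hs_inner_add_right hs_inner_cscale_right
      hs_inner_commutator[OF assms, of X "commutator H X"] hs_inner_self
    by simp
qed

lemma gksl_eq_0_iff:
  assumes "hermitian H" and "\<omega> > 0"
  shows "gksl \<omega> H X = 0 \<longleftrightarrow> H ** X = X ** H"
proof
  assume "gksl \<omega> H X = 0"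
  then have "(\<omega> / 2) * (norm (commutator H X))\<^sup>2 = 0"
    using inner_gksl_self[OF assms(1), of X \<omega>] by simp
  with \<open>\<omega> > 0\<close> show "H ** X = X ** H"
    by (simp add: commutator_eq_0_iff)
next
  assume "H ** X = X ** H"
  then have "commutator H X = 0"
    by (simp add: commutator_eq_0_iff)
  then show "gksl \<omega> H X = 0"
    by (simp add: gksl_hermitian[OF assms(1)])
qed

lemma hamiltonian_rhs_eq_0_iff: "hamiltonian_rhs H X = 0 \<longleftrightarrow> H ** X = X ** H"
proof -
  have "hamiltonian_rhs H X = 0 \<longleftrightarrow> cscale \<i> (hamiltonian_rhs H X) = 0"
    by (auto simp: vec_eq_iff)
  also have "cscale \<i> (hamiltonian_rhs H X) = commutator H X"
    unfolding hamiltonian_rhs_def by (rule matrix_eqI) simp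
  finally show ?thesis
    by (simp add: commutator_eq_0_iff)
qed

lemma gksl_solution_exists: "\<exists>\<rho>. solution (gksl \<omega> H) \<rho>0 \<rho>"
  using linear_ode_solution_exists[of "gksl \<omega> H" \<rho>0 "{0..}"] linear_gksl
  unfolding solution_def by (auto simp: linear_conv_bounded_linear)

lemma gksl_solution_convergent:
  fixes H :: "complex^'n^'n"
  assumes "hermitian H" and "\<omega> > 0" and "solution (gksl \<omega> H) \<rho>0 \<rho>"
  shows "\<exists>l. (\<rho> \<longlongrightarrow> l) at_top"
proof (rule dissipative_linear_flow_convergent)
  define G where "G Y = cscale (- \<i> * of_real (1 - \<omega>)) Y + cscale (- of_real \<omega> / 2) (commutator H Y)"
    for Y :: "complex^'n^'n"
  show "linear (commutator H)" "linear G"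
    unfolding G_def by (rule linear_commutator)
      (rule linearI; simp add: commutator_add commutator_cscale cscale_add cscale_cscale scaleR_eq_cscale
        mult.commute add_ac)
  show "gksl \<omega> H Y = G (commutator H Y)" for Y
    unfolding G_def gksl_hermitian[OF assms(1)] ..
  show "commutator H (gksl \<omega> H Y) = gksl \<omega> H (commutator H Y)" for Y
    unfolding gksl_hermitian[OF assms(1)] by (simp add: commutator_add commutator_cscale)
  show "Y \<bullet> commutator H Z = commutator H Y \<bullet> Z" for Y Z
    by (rule inner_commutator[OF assms(1)])
  show "Y \<bullet> gksl \<omega> H Y \<le> - (\<omega> / 2) * (norm (commutator H Y))\<^sup>2" for Y
    by (simp add: inner_gksl_self[OF assms(1)])
  show "\<omega> / 2 > 0" using assms(2) by simp
  show "(\<rho> has_vector_derivative gksl \<omega> H (\<rho> t)) (at t within {0..})" if "t \<ge> 0" for t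
    using assms(3) that unfolding solution_def by blast
qed

section \<open>Density matrices commuting with \<open>H\<close>\<close>

lemma mtrace_cadj_mult_self: "mtrace (cadj B ** B) = of_real ((norm B)\<^sup>2)"
  unfolding hs_inner_self[symmetric] hs_inner_def mtrace_def
  by (simp add: matrix_matrix_mult_nth) (rule sum.swap)

lemma psd_cadj_mult_self: "psd (cadj B ** (B::complex^'n^'n))"
  unfolding psd_def
proof
  show "hermitian (cadj B ** B)"
    by (simp add: hermitian_def cadj_matrix_mult)
  show "\<forall>x. 0 \<le> Re (\<Sum>i\<in>UNIV. \<Sum>j\<in>UNIV. cnj (x $ i) * (cadj B ** B) $ i $ j * x $ j)"
  proof
    fix x :: "complex^'n"
    define v where "v = B *v x"
    have "(\<Sum>i\<in>UNIV. \<Sum>j\<in>UNIV. cnj (x $ i) * (cadj B ** B) $ i $ j * x $ j)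
        = (\<Sum>i\<in>UNIV. \<Sum>j\<in>UNIV. \<Sum>k\<in>UNIV. cnj (B $ k $ i * x $ i) * (B $ k $ j * x $ j))"
      by (simp add: matrix_matrix_mult_nth sum_distrib_left sum_distrib_right mult_ac)
    also have "\<dots> = (\<Sum>k\<in>UNIV. \<Sum>i\<in>UNIV. \<Sum>j\<in>UNIV. cnj (B $ k $ i * x $ i) * (B $ k $ j * x $ j))"
      by (subst sum.swap) (rule sum.cong[OF refl], rule sum.swap)
    also have "\<dots> = (\<Sum>k\<in>UNIV. cnj (v $ k) * v $ k)"
      by (simp add: v_def matrix_vector_mult_def cnj_sum sum_product)
    finally show "0 \<le> Re (\<Sum>i\<in>UNIV. \<Sum>j\<in>UNIV. cnj (x $ i) * (cadj B ** B) $ i $ j * x $ j)"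
      by (simp add: Re_sum sum_nonneg)
  qed
qed

lemma psd_cscale:
  assumes "psd A" and "c \<ge> 0"
  shows "psd (cscale (of_real c) A)"
proof -
  have "(\<Sum>i\<in>UNIV. \<Sum>j\<in>UNIV. cnj (x $ i) * cscale (of_real c) A $ i $ j * x $ j)
      = of_real c * (\<Sum>i\<in>UNIV. \<Sum>j\<in>UNIV. cnj (x $ i) * A $ i $ j * x $ j)" for x
    by (simp add: sum_distrib_left mult_ac)
  with assms show ?thesis
    unfolding psd_def hermitian_def by (simp add: cadj_cscale)
qed

definition normalized_gram :: "complex^'n^'n \<Rightarrow> complex^'n^'n" where
  "normalized_gram B = cscale (of_real (1 / (norm B)\<^sup>2)) (cadj B ** B)"

lemma density_matrix_normalized_gram:
  assumes "B \<noteq> 0"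
  shows "density_matrix (normalized_gram B)"
  unfolding density_matrix_def normalized_gram_def
  using assms by (intro conjI psd_cscale psd_cadj_mult_self) (simp_all add: mtrace_cscale mtrace_cadj_mult_self)

lemma exists_hermitian_commuting_nonscalar_square:
  fixes H :: "complex^'n^'n"
  assumes "hermitian H" and "CARD('n) > 1"
  shows "\<exists>M. hermitian M \<and> H ** M = M ** H \<and> M ** M \<notin> range mat"
proof (cases "H \<in> range mat")
  case True
  obtain a b :: 'n where "a \<noteq> b"
    using assms(2) card_le_Suc0_iff_eq[of "UNIV :: 'n set"] by auto
  define E :: "complex^'n^'n" where "E = (\<chi> i j. if i = a \<and> j = a then 1 else 0)"
  have "hermitian E"
    unfolding hermitian_def E_def by (rule matrix_eqI) auto
  moreover have "H ** E = E ** H"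
    using True mat_commute by auto
  moreover have "E ** E \<notin> range mat"
  proof
    assume "E ** E \<in> range mat"
    then have "(E ** E) $ a $ a = (E ** E) $ b $ b"
      by (auto simp: mat_def)
    moreover have "(E ** E) $ a $ a = 1"
      by (simp add: E_def matrix_matrix_mult_nth if_distrib if_distribR cong: if_cong)
    moreover have "(E ** E) $ b $ b = 0"
      using \<open>a \<noteq> b\<close> by (simp add: E_def matrix_matrix_mult_nth)
    ultimately show False
      by simp
  qed
  ultimately show ?thesis
    by metis
next
  case H_nonscalar: False
  show ?thesis
  proof (cases "H ** H \<in> range mat")
    case False
    with assms(1) show ?thesis
      by blast
  next
    case True
    \<comment> \<open>then \<open>(H - mat 1)\<^sup>2 = mat c - 2 H + mat 1\<close> is scalar only if \<open>H\<close> is\<close>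
    then obtain c where c: "H ** H = mat c"
      by blast
    define M where "M = H - mat 1"
    have "hermitian M"
      using assms(1) unfolding hermitian_def M_def
      by (simp add: vec_eq_iff mat_def)
    moreover have "H ** M = M ** H"
      unfolding M_def by (simp add: matrix_diff_ldistrib matrix_diff_rdistrib)
    moreover have "M ** M \<notin> range mat"
    proof
      assume "M ** M \<in> range mat"
      then obtain d where "M ** M = mat d"
        by blast
      moreover have "M ** M = mat c - H - H + mat 1"
        unfolding M_def c[symmetric] by (simp add: matrix_diff_ldistrib matrix_diff_rdistrib)
      ultimately have square: "mat d = mat c - H - H + mat 1"
        by simp
      have "H = mat ((c + 1 - d) / 2)"
      proof (rule matrix_eqI)
        fix i j
        have "mat d $ i $ j = (mat c - H - H + mat 1) $ i $ j"
          using square by simp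
        then show "H $ i $ j = mat ((c + 1 - d) / 2) $ i $ j"
          by (cases "i = j") (simp_all add: mat_def field_simps)
      qed
      with H_nonscalar show False
        by blast
    qed
    ultimately show ?thesis
      by blast
  qed
qed

lemma exists_two_commuting_density_matrices:
  fixes H :: "complex^'n^'n"
  assumes "hermitian H" and "CARD('n) > 1"
  shows "\<exists>\<rho>1 \<rho>2. \<rho>1 \<noteq> \<rho>2 \<and> density_matrix \<rho>1 \<and> density_matrix \<rho>2
    \<and> H ** \<rho>1 = \<rho>1 ** H \<and> H ** \<rho>2 = \<rho>2 ** H"
proof -
  obtain M where "hermitian M" and "H ** M = M ** H" and M_nonscalar: "M ** M \<notin> range mat"
    using exists_hermitian_commuting_nonscalar_square[OF assms] by blast
  have "M \<noteq> 0"
  proof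
    assume "M = 0"
    then have "M ** M = mat 0"
      by simp
    with M_nonscalar show False
      by blast
  qed
  have "mat 1 \<noteq> (0 :: complex^'n^'n)"
    by (auto simp: vec_eq_iff mat_def)
  have gram_M: "normalized_gram M = cscale (of_real (1 / (norm M)\<^sup>2)) (M ** M)"
    using \<open>hermitian M\<close> unfolding normalized_gram_def hermitian_def by simp
  have gram_1: "normalized_gram (mat 1 :: complex^'n^'n) \<in> range mat"
    unfolding normalized_gram_def by (simp add: cscale_mat cadj_mat)
  have "normalized_gram M \<notin> range mat"
    unfolding gram_M using M_nonscalar \<open>M \<noteq> 0\<close> by (simp add: cscale_in_range_mat_iff)
  moreover have "H ** normalized_gram M = normalized_gram M ** H"
  proof -
    have "H ** (M ** M) = M ** H ** M"
      by (simp add: matrix_mul_assoc \<open>H ** M = M ** H\<close>)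
    also have "\<dots> = M ** M ** H"
      by (simp add: matrix_mul_assoc[symmetric] \<open>H ** M = M ** H\<close>)
    finally show ?thesis
      unfolding gram_M matrix_mult_cscale_left matrix_mult_cscale_right by simp
  qed
  moreover have "H ** normalized_gram (mat 1) = normalized_gram (mat 1) ** H"
    using gram_1 by (auto simp: mat_commute)
  ultimately show ?thesis
    using density_matrix_normalized_gram \<open>M \<noteq> 0\<close> \<open>mat 1 \<noteq> 0\<close> gram_1
    by (intro exI[of _ "normalized_gram (mat 1)"] exI[of _ "normalized_gram M"]) auto
qed

theorem theorem3:
  fixes H :: "complex^'n^'n" and \<omega> :: real
  assumes "hermitian H" and "0 < \<omega>" and "\<omega> \<le> 1"
  shows "(\<forall>\<rho>. stationary_state (gksl \<omega> H) \<rho> \<longleftrightarrow> stationary_state (hamiltonian_rhs H) \<rho>)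
       \<and> (\<forall>\<rho>. stationary_state (hamiltonian_rhs H) \<rho> \<longleftrightarrow> density_matrix \<rho> \<and> H ** \<rho> = \<rho> ** H)
       \<and> (\<forall>\<rho>0. density_matrix \<rho>0 \<longrightarrow>
            (\<exists>\<rho>. solution (gksl \<omega> H) \<rho>0 \<rho>) \<and>
            (\<forall>\<rho>. solution (gksl \<omega> H) \<rho>0 \<rho> \<longrightarrow> (\<exists>\<rho>inf. (\<rho> \<longlongrightarrow> \<rho>inf) at_top)))
       \<and> ((\<exists>\<rho>1 \<rho>2. \<rho>1 \<noteq> \<rho>2 \<and> stationary_state (gksl \<omega> H) \<rho>1 \<and> stationary_state (gksl \<omega> H) \<rho>2)
            \<longleftrightarrow> CARD('n) > 1)"
proof -
  have gksl_stationary: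
    "stationary_state (gksl \<omega> H) \<rho> \<longleftrightarrow> density_matrix \<rho> \<and> H ** \<rho> = \<rho> ** H" for \<rho>
    unfolding stationary_state_def gksl_eq_0_iff[OF assms(1,2)] ..
  have hamiltonian_stationary:
    "stationary_state (hamiltonian_rhs H) \<rho> \<longleftrightarrow> density_matrix \<rho> \<and> H ** \<rho> = \<rho> ** H" for \<rho>
    unfolding stationary_state_def hamiltonian_rhs_eq_0_iff ..
  have "CARD('n) > 1" if "\<rho>1 \<noteq> \<rho>2" "density_matrix \<rho>1" "density_matrix \<rho>2"
    for \<rho>1 \<rho>2 :: "complex^'n^'n"
  proof (rule ccontr)
    assume "\<not> CARD('n) > 1"
    then have "CARD('n) = 1"
      using finite_UNIV_card_ge_0[where 'a='n, OF finite_class.finite_UNIV] by linarith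
    with that show False
      using matrix_eq_if_mtrace_eq[of \<rho>1 \<rho>2] unfolding density_matrix_def by simp
  qed
  then show ?thesis
    using gksl_stationary hamiltonian_stationary gksl_solution_exists
      gksl_solution_convergent[OF assms(1,2)] exists_two_commuting_density_matrices[OF assms(1)]
    by meson
qed

end
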